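(* Let $M\subset\mathbb{CP}^n$ be a smooth hypersurface defined by a homogeneous polynomial $F$ of degree $d$. Work in the affine chart $Z_0\neq0$ with coordinates $z_i=Z_i/Z_0$, $i=1,\dots,n$, let $f(z)=F(1,z_1,\dots,z_n)$, and on an open set where $\partial f/\partial z_1\ne0$ write $M$ locally as a graph $z_1=z_1(z_2,\dots,z_n)$ with $z_1$ holomorphic in $(z_2,\dots,z_n)$; put $a_i=\partial z_1/\partial z_i$ ($2\le i\le n$), $|z|^2=\sum_{i=1}^n|z_i|^2$, $|a|^2=\sum_{i=2}^n|a_i|^2$, $F_k=\frac{\partial F}{\partial Z_k}$ evaluated at $(1,z_1,\dots,z_n)$, and $\rho=\frac{\sum_{k=0}^n|F_k|^2}{(1+|z|^2)|F_1|^2}$. The restriction of the Fubini–Study form to $M$ is $\omega=\frac{\sqrt{-1}}{2\pi}\sum_{i,j=2}^n\tilde g_{i\bar j}dz_i\wedge d\bar z_j$ with $$\tilde g_{i\bar j}=\frac{\delta_{ij}+a_i\bar a_j}{1+|z|^2}-\frac{(\bar z_i+\bar z_1a_i)(z_j+z_1\bar a_j)}{(1+|z|^2)^2}.$$ Then the inverse matrix $\tilde g^{i\bar j}$ (characterized by $\sum_{j=2}^n\tilde g_{i\bar j}\tilde g^{k\bar j}=\delta_{ik}$) is $$\tilde g^{i\bar j}=\frac1\rho\Big(\rho(1+|z|^2)\delta_{ji}-a_j\bar a_i+\bar z_jz_i(1+|a|^2)\Big)-\frac1\rho\Big(a_jz_i\big(\textstyle\sum_{k=2}^n\bar a_k\bar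 z_k-\bar z_1\big)+\bar z_j\bar a_i\big(\sum_{k=2}^na_kz_k-z_1\big)\Big).$$
   Context: The Fubini–Study form on $\mathbb{CP}^n$ is $\omega_{FS}=\frac{\sqrt{-1}}{2\pi}\partial\bar\partial\log\sum_{k=0}^n|Z_k|^2$. *)

theory Defs
  imports "HOL-Analysis.Analysis"
begin

text \<open>Homogeneous coordinates on CP^n are (Z0, Z1, W) where W :: complex^'m collects
  Z2..Zn (so n = CARD('m) + 1).  A polynomial is given by a finite set S of exponent
  vectors (exponent of Z0, exponent of Z1, exponents of the W-coordinates) and coefficients c.\<close>

definition hpoly ::
  "(nat \<times> nat \<times> ('m::finite \<Rightarrow> nat)) set \<Rightarrow> (nat \<times> nat \<times> ('m \<Rightarrow> nat) \<Rightarrow> complex)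
   \<Rightarrow> complex \<Rightarrow> complex \<Rightarrow> complex^'m \<Rightarrow> complex" where
  "hpoly S c Z0 Z1 W =
     (\<Sum>e\<in>S. c e * Z0 ^ fst e * Z1 ^ fst (snd e) * (\<Prod>i\<in>UNIV. (W$i) ^ snd (snd e) i))"

definition homogeneous_deg :: "(nat \<times> nat \<times> ('m::finite \<Rightarrow> nat)) set \<Rightarrow> nat \<Rightarrow> bool" where
  "homogeneous_deg S d \<longleftrightarrow> finite S \<and> (\<forall>e\<in>S. fst e + fst (snd e) + sum (snd (snd e)) UNIV = d)"

definition vupd :: "'a^'m \<Rightarrow> 'm \<Rightarrow> 'a \<Rightarrow> 'a^'m" where
  "vupd w i t = (\<chi> j. if j = i then t else w$j)"

definition dZ0 :: "(complex \<Rightarrow> complex \<Rightarrow> complex^'m \<Rightarrow> complex) \<Rightarrow> complex \<Rightarrow> complex \<Rightarrow> complex^'m \<Rightarrow> complex" where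
  "dZ0 F Z0 Z1 W = deriv (\<lambda>t. F t Z1 W) Z0"
definition dZ1 :: "(complex \<Rightarrow> complex \<Rightarrow> complex^'m \<Rightarrow> complex) \<Rightarrow> complex \<Rightarrow> complex \<Rightarrow> complex^'m \<Rightarrow> complex" where
  "dZ1 F Z0 Z1 W = deriv (\<lambda>t. F Z0 t W) Z1"
definition dW :: "(complex \<Rightarrow> complex \<Rightarrow> complex^'m \<Rightarrow> complex) \<Rightarrow> complex \<Rightarrow> complex \<Rightarrow> complex^'m \<Rightarrow> 'm \<Rightarrow> complex" where
  "dW F Z0 Z1 W k = deriv (\<lambda>t. F Z0 Z1 (vupd W k t)) (W$k)"

definition smooth_hypersurface :: "(complex \<Rightarrow> complex \<Rightarrow> complex^'m \<Rightarrow> complex) \<Rightarrow> bool" where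
  "smooth_hypersurface F \<longleftrightarrow>
     (\<forall>Z0 Z1 W. (Z0, Z1, W) \<noteq> (0, 0, 0) \<and> F Z0 Z1 W = 0 \<longrightarrow>
        dZ0 F Z0 Z1 W \<noteq> 0 \<or> dZ1 F Z0 Z1 W \<noteq> 0 \<or> (\<exists>k. dW F Z0 Z1 W k \<noteq> 0))"

definition holomorphic_several :: "(complex^'m) set \<Rightarrow> (complex^'m \<Rightarrow> complex) \<Rightarrow> bool" where
  "holomorphic_several U g \<longleftrightarrow> open U \<and>
     (\<forall>w\<in>U. \<exists>L. (g has_derivative L) (at w) \<and> (\<forall>\<zeta> v. L (\<zeta> *s v) = \<zeta> * L v))"

end

theory Submission
  imports Defs
begin

(*
  Along the graph z1 = g(w) of the hypersurface, implicit differentiation of F(1, g(w), w) = 0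
  gives F_k = - F_1 a_k, and Euler's identity for the homogeneous F then gives
  F_0 = F_1 (sum_k a_k w_k - z1).  Hence rho (1 + |z|^2) = 1 + |a|^2 + |sum_k a_k w_k - z1|^2.
  With N = 1 + |z|^2, the metric matrix is Id/N plus a rank-two term spanned by conj a and w,
  and the claimed inverse is N Id plus a rank-two term spanned by a and conj w; expanding their
  product leaves the identity plus a scalar remainder, which vanishes exactly because of the
  identity for rho.
*)

definition monomial_except :: "('m::finite \<Rightarrow> nat) \<Rightarrow> complex^'m \<Rightarrow> 'm \<Rightarrow> complex" where
  "monomial_except q W k = (\<Prod>j\<in>UNIV - {k}. (W$j) ^ q j)"

definition hpoly_dZ0 ::
  "(nat \<times> nat \<times> ('m::finite \<Rightarrow> nat)) set \<Rightarrow> (nat \<times> nat \<times> ('m \<Rightarrow> nat) \<Rightarrow> complex)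
   \<Rightarrow> complex \<Rightarrow> complex \<Rightarrow> complex^'m \<Rightarrow> complex" where
  "hpoly_dZ0 S c Z0 Z1 W =
     (\<Sum>e\<in>S. c e * (of_nat (fst e) * Z0 ^ (fst e - 1)) * Z1 ^ fst (snd e) * (\<Prod>i\<in>UNIV. (W$i) ^ snd (snd e) i))"

definition hpoly_dZ1 ::
  "(nat \<times> nat \<times> ('m::finite \<Rightarrow> nat)) set \<Rightarrow> (nat \<times> nat \<times> ('m \<Rightarrow> nat) \<Rightarrow> complex)
   \<Rightarrow> complex \<Rightarrow> complex \<Rightarrow> complex^'m \<Rightarrow> complex" where
  "hpoly_dZ1 S c Z0 Z1 W =
     (\<Sum>e\<in>S. c e * Z0 ^ fst e * (of_nat (fst (snd e)) * Z1 ^ (fst (snd e) - 1)) * (\<Prod>i\<in>UNIV. (W$i) ^ snd (snd e) i))"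

definition hpoly_dW ::
  "(nat \<times> nat \<times> ('m::finite \<Rightarrow> nat)) set \<Rightarrow> (nat \<times> nat \<times> ('m \<Rightarrow> nat) \<Rightarrow> complex)
   \<Rightarrow> complex \<Rightarrow> complex \<Rightarrow> complex^'m \<Rightarrow> 'm \<Rightarrow> complex" where
  "hpoly_dW S c Z0 Z1 W k =
     (\<Sum>e\<in>S. c e * Z0 ^ fst e * Z1 ^ fst (snd e) *
        (of_nat (snd (snd e) k) * (W$k) ^ (snd (snd e) k - 1) * monomial_except (snd (snd e)) W k))"

lemma prod_power_eq_monomial_except: "(\<Prod>i\<in>UNIV. (W$i) ^ q i) = (W$k) ^ q k * monomial_except q W k"
  unfolding monomial_except_def by (simp add: prod.remove)

lemma vupd_nth_same [simp]: "vupd W k t $ k = t"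
  by (simp add: vupd_def)

lemma vupd_self [simp]: "vupd W k (W$k) = W"
  by (simp add: vupd_def vec_eq_iff)

lemma monomial_except_vupd [simp]: "monomial_except q (vupd W k t) k = monomial_except q W k"
  unfolding monomial_except_def vupd_def by (intro prod.cong) auto

lemma has_field_derivative_hpoly:
  assumes "finite S"
    and "(f0 has_field_derivative D0) (at t)"
    and "(f1 has_field_derivative D1) (at t)"
    and "(f2 has_field_derivative D2) (at t)"
  shows "((\<lambda>x. hpoly S c (f0 x) (f1 x) (vupd W k (f2 x))) has_field_derivative
     hpoly_dZ0 S c (f0 t) (f1 t) (vupd W k (f2 t)) * D0 + hpoly_dZ1 S c (f0 t) (f1 t) (vupd W k (f2 t)) * D1
      + hpoly_dW S c (f0 t) (f1 t) (vupd W k (f2 t)) k * D2) (at t)"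
proof -
  have hpoly_eq: "hpoly S c (f0 x) (f1 x) (vupd W k (f2 x)) =
     (\<Sum>e\<in>S. c e * f0 x ^ fst e * f1 x ^ fst (snd e)
               * (f2 x ^ snd (snd e) k * monomial_except (snd (snd e)) W k))" for x
    unfolding hpoly_def by (intro sum.cong refl) (simp add: prod_power_eq_monomial_except[of _ _ k])
  show ?thesis
    unfolding hpoly_eq
    by (rule DERIV_cong, (rule DERIV_sum derivative_eq_intros DERIV_power assms refl)+)
      (simp add: hpoly_dZ0_def hpoly_dZ1_def hpoly_dW_def prod_power_eq_monomial_except[of _ _ k]
        sum.distrib sum_distrib_left algebra_simps)
qed

lemma dZ0_hpoly: "finite S \<Longrightarrow> dZ0 (hpoly S c) Z0 Z1 W = hpoly_dZ0 S c Z0 Z1 W"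
  unfolding dZ0_def
  using has_field_derivative_hpoly[OF _ DERIV_ident DERIV_const[of Z1] DERIV_const[of "W$k"],
      where W=W and k=k and t=Z0]
  by (auto intro: DERIV_imp_deriv)

lemma dZ1_hpoly: "finite S \<Longrightarrow> dZ1 (hpoly S c) Z0 Z1 W = hpoly_dZ1 S c Z0 Z1 W"
  unfolding dZ1_def
  using has_field_derivative_hpoly[OF _ DERIV_const[of Z0] DERIV_ident DERIV_const[of "W$k"],
      where W=W and k=k and t=Z1]
  by (auto intro: DERIV_imp_deriv)

lemma dW_hpoly: "finite S \<Longrightarrow> dW (hpoly S c) Z0 Z1 W k = hpoly_dW S c Z0 Z1 W k"
  unfolding dW_def
  using has_field_derivative_hpoly[OF _ DERIV_const[of Z0] DERIV_const[of Z1] DERIV_ident,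
      where W=W and k=k and t="W$k"]
  by (auto intro: DERIV_imp_deriv)

lemma sum_coord_mult_dW_monomial:
  "(\<Sum>k\<in>UNIV. W$k * (of_nat (q k) * (W$k) ^ (q k - 1) * monomial_except q W k))
     = of_nat (sum q UNIV) * (\<Prod>i\<in>UNIV. (W$i) ^ q i)"
proof -
  have "W$k * (of_nat (q k) * (W$k) ^ (q k - 1) * monomial_except q W k)
      = of_nat (q k) * (\<Prod>i\<in>UNIV. (W$i) ^ q i)" for k
    by (cases "q k") (auto simp: prod_power_eq_monomial_except[of _ _ k] mult_ac)
  then show ?thesis by (simp only: of_nat_sum sum_distrib_right)
qed

lemma hpoly_euler:
  assumes "homogeneous_deg S d"
  shows "Z0 * hpoly_dZ0 S c Z0 Z1 W + Z1 * hpoly_dZ1 S c Z0 Z1 W + (\<Sum>k\<in>UNIV. W$k * hpoly_dW S c Z0 Z1 W k)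
     = of_nat d * hpoly S c Z0 Z1 W"
proof -
  have deg: "of_nat (fst e) + of_nat (fst (snd e)) + of_nat (sum (snd (snd e)) UNIV) = (of_nat d :: complex)"
    if "e \<in> S" for e
    using assms that unfolding homogeneous_deg_def by (metis of_nat_add)
  have dW_part: "(\<Sum>k\<in>UNIV. W$k * hpoly_dW S c Z0 Z1 W k) = (\<Sum>e\<in>S. c e * Z0 ^ fst e * Z1 ^ fst (snd e) *
      (\<Sum>k\<in>UNIV. W$k * (of_nat (snd (snd e) k) * (W$k) ^ (snd (snd e) k - 1) * monomial_except (snd (snd e)) W k)))"
    unfolding hpoly_dW_def sum_distrib_left by (subst sum.swap) (simp add: mult_ac)
  have "Z0 * hpoly_dZ0 S c Z0 Z1 W + Z1 * hpoly_dZ1 S c Z0 Z1 W + (\<Sum>k\<in>UNIV. W$k * hpoly_dW S c Z0 Z1 W k)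
    = (\<Sum>e\<in>S. c e * Z0 ^ fst e * Z1 ^ fst (snd e) * (\<Prod>i\<in>UNIV. (W$i) ^ snd (snd e) i) *
         (of_nat (fst e) + of_nat (fst (snd e)) + of_nat (sum (snd (snd e)) UNIV)))"
    unfolding dW_part sum_coord_mult_dW_monomial hpoly_dZ0_def hpoly_dZ1_def sum_distrib_left sum.distrib[symmetric]
    apply (intro sum.cong refl)
    subgoal for e by (cases "fst e"; cases "fst (snd e)") (simp_all add: algebra_simps)
    done
  also have "\<dots> = of_nat d * hpoly S c Z0 Z1 W"
    unfolding hpoly_def sum_distrib_left by (intro sum.cong refl) (simp add: deg mult_ac del: of_nat_sum)
  finally show ?thesis .
qed

lemma bounded_linear_axis: "bounded_linear (axis i :: 'a::euclidean_space \<Rightarrow> 'a^'m::finite)"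
  by (auto simp: linear_conv_bounded_linear[symmetric] intro!: linearI simp: vec_eq_iff axis_def)

lemma vupd_eq_axis: "vupd (w::'a::ab_group_add^'m) i t = (w - axis i (w$i)) + axis i t"
  by (simp add: vec_eq_iff vupd_def axis_def)

lemma has_derivative_vupd: "(vupd (w::'a::euclidean_space^'m::finite) i has_derivative axis i) (at x)"
proof -
  have "((\<lambda>t. (w - axis i (w$i)) + axis i t) has_derivative (\<lambda>t. 0 + axis i t)) (at x)"
    by (intro has_derivative_add has_derivative_const
        bounded_linear.has_derivative[OF bounded_linear_axis has_derivative_ident])
  then show ?thesis by (simp add: vupd_eq_axis[abs_def])
qed

lemma holomorphic_several_partial:
  fixes g :: "complex^'m::finite \<Rightarrow> complex"
  assumes "holomorphic_several U g" "w \<in> U"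
  shows "((\<lambda>t. g (vupd w i t)) has_field_derivative deriv (\<lambda>t. g (vupd w i t)) (w$i)) (at (w$i))"
proof -
  from assms obtain L where L: "(g has_derivative L) (at w)" and L_lin: "\<And>\<zeta> v. L (\<zeta> *s v) = \<zeta> * L v"
    unfolding holomorphic_several_def by blast
  have "((\<lambda>t. g (vupd w i t)) has_derivative (\<lambda>t. L (axis i t))) (at (w$i))"
    by (rule has_derivative_compose[OF has_derivative_vupd]) (simp add: L)
  moreover have "(\<lambda>t. L (axis i t)) = (*) (L (axis i 1))"
  proof
    fix t
    have "axis i t = t *s (axis i 1 :: complex^'m)" by (simp add: vec_eq_iff axis_def)
    then show "L (axis i t) = L (axis i 1) * t" by (simp add: L_lin mult.commute)
  qed
  ultimately have "(\<lambda>t. g (vupd w i t)) field_differentiable at (w$i)"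
    unfolding field_differentiable_def has_field_derivative_def by auto
  then show ?thesis by (rule field_differentiable_derivI)
qed

lemma hpoly_graph_dW:
  assumes "finite S" and g_hol: "holomorphic_several U g"
    and graph: "\<forall>w\<in>U. hpoly S c 1 (g w) w = 0" and "w \<in> U"
  shows "hpoly_dW S c 1 (g w) w i = - hpoly_dZ1 S c 1 (g w) w * deriv (\<lambda>t. g (vupd w i t)) (w$i)"
proof -
  define a where "a = deriv (\<lambda>t. g (vupd w i t)) (w$i)"
  define T where "T = vupd w i -` U"
  have "continuous_on UNIV (vupd w i)"
    by (rule has_derivative_continuous_on) (rule has_derivative_at_withinI[OF has_derivative_vupd])
  then have "open T"
    using g_hol unfolding T_def holomorphic_several_def by (blast intro: open_vimage)
  have "((\<lambda>t. hpoly S c 1 (g (vupd w i t)) (vupd w i t)) has_field_derivative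
      hpoly_dZ0 S c 1 (g w) w * 0 + hpoly_dZ1 S c 1 (g w) w * a + hpoly_dW S c 1 (g w) w i * 1) (at (w$i))"
    using has_field_derivative_hpoly[OF \<open>finite S\<close> DERIV_const[of 1]
        holomorphic_several_partial[OF g_hol \<open>w \<in> U\<close>, of i] DERIV_ident, where c=c and W=w and k=i]
    by (simp add: a_def)
  then have "((\<lambda>t. 0) has_field_derivative
      hpoly_dZ0 S c 1 (g w) w * 0 + hpoly_dZ1 S c 1 (g w) w * a + hpoly_dW S c 1 (g w) w i * 1) (at (w$i))"
    by (rule has_field_derivative_transform_within_open[OF _ \<open>open T\<close>])
      (use graph \<open>w \<in> U\<close> in \<open>simp_all add: T_def\<close>)
  then have "hpoly_dZ1 S c 1 (g w) w * a + hpoly_dW S c 1 (g w) w i = 0"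
    using DERIV_unique[OF _ DERIV_const] by fastforce
  then show ?thesis
    by (simp add: a_def eq_neg_iff_add_eq_0 add.commute)
qed

lemma hpoly_graph_dZ0:
  assumes hom: "homogeneous_deg S d" and g_hol: "holomorphic_several U g"
    and graph: "\<forall>w\<in>U. hpoly S c 1 (g w) w = 0" and "w \<in> U"
  shows "hpoly_dZ0 S c 1 (g w) w
    = hpoly_dZ1 S c 1 (g w) w * ((\<Sum>k\<in>UNIV. deriv (\<lambda>t. g (vupd w k t)) (w$k) * w$k) - g w)"
proof -
  have "finite S" using hom by (simp add: homogeneous_deg_def)
  have "hpoly_dZ0 S c 1 (g w) w + g w * hpoly_dZ1 S c 1 (g w) w
      + (\<Sum>k\<in>UNIV. w$k * hpoly_dW S c 1 (g w) w k) = 0"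
    using hpoly_euler[OF hom, of 1 c "g w" w] graph \<open>w \<in> U\<close> by simp
  then show ?thesis
    unfolding hpoly_graph_dW[OF \<open>finite S\<close> g_hol graph \<open>w \<in> U\<close>]
    by (simp add: sum_distrib_left sum_negf algebra_simps add_eq_0_iff2)
qed

lemma sum_diag_rank2_mult:
  fixes Y1 Y2 Z1 Z2 :: "'m::finite \<Rightarrow> 'a::comm_ring_1"
  shows "(\<Sum>j\<in>UNIV. ((if i = j then X else 0) + Y1 j * \<mu> + Y2 j * \<nu>)
                  * ((if j = k then P else 0) + Z1 j * \<beta> + Z2 j * \<gamma>))
    = (if i = k then X * P else 0) + X * Z1 i * \<beta> + X * Z2 i * \<gamma>
      + \<mu> * Y1 k * P + \<mu> * \<beta> * (\<Sum>j\<in>UNIV. Y1 j * Z1 j) + \<mu> * \<gamma> * (\<Sum>j\<in>UNIV. Y1 j * Z2 j)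
      + \<nu> * Y2 k * P + \<nu> * \<beta> * (\<Sum>j\<in>UNIV. Y2 j * Z1 j) + \<nu> * \<gamma> * (\<Sum>j\<in>UNIV. Y2 j * Z2 j)"
proof -
  have if_mult: "(if b then x else 0) * y = (if b then x * y else 0)"
    and mult_if: "y * (if b then x else 0) = (if b then y * x else 0)" for b and x y :: 'a
    by simp_all
  show ?thesis
    by (simp only: distrib_left distrib_right sum.distrib)
      (simp add: if_mult mult_if sum_distrib_left mult_ac)
qed

(* zb, wbi, akb stand for cnj z, cnj (w$i), cnj (a k); nw = |w|^2, na = |a|^2, t = sum_k a_k w_k. *)
lemma graph_metric_inverse_remainder_eq_0:
  fixes N \<rho> nw na z zb t tb ai wbi akb wk :: complex
  assumes "N \<noteq> 0" and "\<rho> \<noteq> 0" and N_eq: "N = 1 + z * zb + nw"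
    and \<rho>_eq: "\<rho> * N = 1 + na + (t - z) * (tb - zb)"
  defines "u \<equiv> wbi + zb * ai"
  defines "\<mu> \<equiv> ai / N - u * z / N^2" and "\<nu> \<equiv> - u / N^2"
  defines "\<beta> \<equiv> (- akb - wk * (tb - zb)) / \<rho>" and "\<gamma> \<equiv> (wk * (1 + na) - akb * (t - z)) / \<rho>"
  shows "1 / N * (ai * \<beta> + wbi * \<gamma>) + \<mu> * akb * N + \<mu> * \<beta> * na + \<mu> * \<gamma> * tb
    + \<nu> * wk * N + \<nu> * \<beta> * t + \<nu> * \<gamma> * nw = 0"
proof -
  have "na = \<rho> * N - 1 - (t - z) * (tb - zb)" and "nw = N - 1 - z * zb"
    using \<rho>_eq N_eq by simp_all
  then show ?thesis
    unfolding u_def \<mu>_def \<nu>_def \<beta>_def \<gamma>_def using \<open>N \<noteq> 0\<close> \<open>\<rho> \<noteq> 0\<close>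
    by (simp add: field_simps) algebra
qed

lemma of_real_sum_norm_sq: "complex_of_real (\<Sum>i\<in>A. (cmod (f i))^2) = (\<Sum>i\<in>A. f i * cnj (f i))"
  by (simp only: of_real_sum complex_norm_square)

lemma graph_metric_inverse:
  fixes a :: "'m::finite \<Rightarrow> complex" and w :: "complex^'m" and z :: complex and \<rho> :: real
  defines "nz \<equiv> 1 + (cmod z)^2 + (\<Sum>i\<in>UNIV. (cmod (w$i))^2)"
    and "na \<equiv> \<Sum>i\<in>UNIV. (cmod (a i))^2"
  assumes \<rho>_eq: "\<rho> * nz = 1 + na + (cmod ((\<Sum>k\<in>UNIV. a k * w$k) - z))^2"
  shows "(\<Sum>j\<in>UNIV. (((if i = j then 1 else 0) + a i * cnj (a j)) / complex_of_real nz
              - (cnj (w$i) + cnj z * a i) * (w$j + z * cnj (a j)) / complex_of_real (nz^2)) *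
             ((complex_of_real (\<rho> * nz) * (if j = k then 1 else 0) - a j * cnj (a k)
                        + cnj (w$j) * w$k * complex_of_real (1 + na)) / complex_of_real \<rho>
              - (a j * w$k * ((\<Sum>k\<in>UNIV. cnj (a k) * cnj (w$k)) - cnj z)
                 + cnj (w$j) * cnj (a k) * ((\<Sum>k\<in>UNIV. a k * w$k) - z)) / complex_of_real \<rho>))
         = (if i = k then 1 else 0)" (is "(\<Sum>j\<in>UNIV. ?G j * ?H j) = _")
proof -
  define N R na' where "N = complex_of_real nz" and "R = complex_of_real \<rho>" and "na' = complex_of_real na"
  define t tb nw where "t = (\<Sum>k\<in>UNIV. a k * w$k)" and "tb = (\<Sum>k\<in>UNIV. cnj (a k) * cnj (w$k))"
    and "nw = (\<Sum>j\<in>UNIV. w$j * cnj (w$j))"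
  define u where "u = cnj (w$i) + cnj z * a i"
  define \<mu> \<nu> where "\<mu> = a i / N - u * z / N^2" and "\<nu> = - u / N^2"
  define \<beta> \<gamma> where "\<beta> = (- cnj (a k) - w$k * (tb - cnj z)) / R"
    and "\<gamma> = (w$k * (1 + na') - cnj (a k) * (t - z)) / R"
  have "nz > 0" "1 + na + (cmod ((\<Sum>k\<in>UNIV. a k * w$k) - z))^2 > 0"
    unfolding nz_def na_def by (intro add_pos_nonneg; auto intro: sum_nonneg)+
  then have "N \<noteq> 0" and "R \<noteq> 0" using \<rho>_eq by (auto simp: N_def R_def)
  have N_eq: "N = 1 + z * cnj z + nw"
    unfolding N_def nz_def nw_def by (simp only: of_real_add of_real_1 of_real_sum_norm_sq complex_norm_square)
  have na'_eq: "na' = (\<Sum>j\<in>UNIV. cnj (a j) * a j)"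
    unfolding na'_def na_def of_real_sum_norm_sq by (simp add: mult.commute)
  have R_eq: "R * N = 1 + na' + (t - z) * (tb - cnj z)"
    using arg_cong[OF \<rho>_eq, of complex_of_real]
    unfolding R_def N_def na'_def of_real_mult of_real_add of_real_1 complex_norm_square
    by (simp add: t_def tb_def)
  have G_eq: "?G j = (if i = j then 1 / N else 0) + cnj (a j) * \<mu> + w$j * \<nu>" for j
    using \<open>N \<noteq> 0\<close> unfolding \<mu>_def \<nu>_def u_def N_def of_real_power
    by (auto simp: field_simps power2_eq_square)
  have H_eq: "?H j = (if j = k then N else 0) + a j * \<beta> + cnj (w$j) * \<gamma>" for j
    using \<open>R \<noteq> 0\<close> unfolding \<beta>_def \<gamma>_def t_def tb_def na'_def R_def N_def of_real_mult of_real_add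
    by (auto simp: field_simps)
  have t_eq: "(\<Sum>j\<in>UNIV. w$j * a j) = t" by (simp add: t_def mult.commute)
  have "(\<Sum>j\<in>UNIV. ?G j * ?H j) = (\<Sum>j\<in>UNIV.
      ((if i = j then 1 / N else 0) + cnj (a j) * \<mu> + w$j * \<nu>) *
      ((if j = k then N else 0) + a j * \<beta> + cnj (w$j) * \<gamma>))"
    by (simp only: G_eq H_eq)
  also have "\<dots> = (if i = k then 1 else 0)
      + (1 / N * (a i * \<beta> + cnj (w$i) * \<gamma>) + \<mu> * cnj (a k) * N + \<mu> * \<beta> * na' + \<mu> * \<gamma> * tb
         + \<nu> * w$k * N + \<nu> * \<beta> * t + \<nu> * \<gamma> * nw)"
    unfolding sum_diag_rank2_mult na'_eq[symmetric] tb_def[symmetric] nw_def[symmetric] t_eq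
    using \<open>N \<noteq> 0\<close> by (simp add: distrib_left add.assoc mult.assoc)
  also have "\<dots> = (if i = k then 1 else 0)"
    using graph_metric_inverse_remainder_eq_0[OF \<open>N \<noteq> 0\<close> \<open>R \<noteq> 0\<close> N_eq R_eq,
        where ai = "a i" and wbi = "cnj (w$i)" and akb = "cnj (a k)" and wk = "w$k"]
    unfolding \<mu>_def \<nu>_def \<beta>_def \<gamma>_def u_def by (simp only: add_0_right)
  finally show ?thesis .
qed

lemma norm_gradient_ratio_mult:
  fixes F1 s :: complex and a :: "'m::finite \<Rightarrow> complex" and nz :: real
  assumes "F1 \<noteq> 0" and "nz \<noteq> 0"
  shows "((cmod (F1 * s))^2 + (cmod F1)^2 + (\<Sum>k\<in>UNIV. (cmod (- F1 * a k))^2)) / (nz * (cmod F1)^2) * nz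
    = 1 + (\<Sum>k\<in>UNIV. (cmod (a k))^2) + (cmod s)^2"
  using assms by (simp add: norm_mult sum_distrib_left[symmetric] field_simps)

lemma hypersurface_graph_rho_eq:
  assumes hom: "homogeneous_deg S d" and g_hol: "holomorphic_several U g"
    and graph: "\<forall>w\<in>U. F 1 (g w) w = 0" and F1_nz: "dZ1 F 1 (g w) w \<noteq> 0" and "w \<in> U"
    and F_def: "F = hpoly S c"
  defines "a \<equiv> \<lambda>i. deriv (\<lambda>t. g (vupd w i t)) (w$i)"
    and "nz \<equiv> 1 + (cmod (g w))^2 + (\<Sum>i\<in>UNIV. (cmod (w$i))^2)"
  shows "((cmod (dZ0 F 1 (g w) w))^2 + (cmod (dZ1 F 1 (g w) w))^2 + (\<Sum>k\<in>UNIV. (cmod (dW F 1 (g w) w k))^2))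
      / (nz * (cmod (dZ1 F 1 (g w) w))^2) * nz
    = 1 + (\<Sum>i\<in>UNIV. (cmod (a i))^2) + (cmod ((\<Sum>k\<in>UNIV. a k * w$k) - g w))^2"
proof -
  have "finite S" using hom by (simp add: homogeneous_deg_def)
  have graph': "\<forall>w\<in>U. hpoly S c 1 (g w) w = 0" using graph by (simp add: F_def)
  have F0_eq: "dZ0 F 1 (g w) w = dZ1 F 1 (g w) w * ((\<Sum>k\<in>UNIV. a k * w$k) - g w)"
    using hpoly_graph_dZ0[OF hom g_hol graph' \<open>w \<in> U\<close>]
    by (simp add: F_def a_def dZ0_hpoly dZ1_hpoly \<open>finite S\<close>)
  have Fk_eq: "dW F 1 (g w) w k = - dZ1 F 1 (g w) w * a k" for k
    using hpoly_graph_dW[OF \<open>finite S\<close> g_hol graph' \<open>w \<in> U\<close>]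
    by (simp add: F_def a_def dW_hpoly dZ1_hpoly \<open>finite S\<close>)
  have "nz > 0" unfolding nz_def by (intro add_pos_nonneg) (auto intro: sum_nonneg)
  then show ?thesis
    unfolding F0_eq Fk_eq by (intro norm_gradient_ratio_mult F1_nz) simp
qed

theorem lemma2p1:
  fixes S :: "(nat \<times> nat \<times> ('m::finite \<Rightarrow> nat)) set"
    and c :: "nat \<times> nat \<times> ('m \<Rightarrow> nat) \<Rightarrow> complex"
    and d :: nat
    and F :: "complex \<Rightarrow> complex \<Rightarrow> complex^'m \<Rightarrow> complex"
    and U :: "(complex^'m) set"
    and g :: "complex^'m \<Rightarrow> complex"
  assumes F_def: "F = hpoly S c"
    and hom: "homogeneous_deg S d"
    and smooth: "smooth_hypersurface F"
    and U_open: "open U"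
    and g_hol: "holomorphic_several U g"
    and graph: "\<forall>w\<in>U. F 1 (g w) w = 0"
    and F1_nz: "\<forall>w\<in>U. dZ1 F 1 (g w) w \<noteq> 0"
  shows "\<forall>w\<in>U.
    let z1 = g w;
        a = (\<lambda>i. deriv (\<lambda>t. g (vupd w i t)) (w$i));
        F0 = dZ0 F 1 z1 w;
        F1 = dZ1 F 1 z1 w;
        Fk = (\<lambda>k. dW F 1 z1 w k);
        nz = 1 + (cmod z1)^2 + (\<Sum>i\<in>UNIV. (cmod (w$i))^2);
        na = (\<Sum>i\<in>UNIV. (cmod (a i))^2);
        \<rho> = ((cmod F0)^2 + (cmod F1)^2 + (\<Sum>k\<in>UNIV. (cmod (Fk k))^2)) / (nz * (cmod F1)^2);
        G = (\<lambda>i j. ((if i = j then 1 else 0) + a i * cnj (a j)) / complex_of_real nz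
              - (cnj (w$i) + cnj z1 * a i) * (w$j + z1 * cnj (a j)) / complex_of_real (nz^2));
        Ginv = (\<lambda>i j. (complex_of_real (\<rho> * nz) * (if j = i then 1 else 0) - a j * cnj (a i)
                        + cnj (w$j) * w$i * complex_of_real (1 + na)) / complex_of_real \<rho>
              - (a j * w$i * ((\<Sum>k\<in>UNIV. cnj (a k) * cnj (w$k)) - cnj z1)
                 + cnj (w$j) * cnj (a i) * ((\<Sum>k\<in>UNIV. a k * w$k) - z1)) / complex_of_real \<rho>)
    in \<forall>i k. (\<Sum>j\<in>UNIV. G i j * Ginv k j) = (if i = k then 1 else 0)"
  unfolding Let_def
  using hypersurface_graph_rho_eq[OF hom g_hol graph F1_nz[rule_format] _ F_def]
  by (intro ballI allI graph_metric_inverse) simp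

end
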